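(* For every $n\ge 2$, the relation algebra $A_n$ is representable over $(\mathbb{Z}/2\mathbb{Z})^{3k+1}$ (a set of $2^{3k+1}$ points) for all sufficiently large $k\in\omega$. In particular, for $n\ge 14$ it suffices to take $k=n$, so $A_n$ has a representation over a set of $2^{3n+1}$ points for all $n\ge 14$.
   Context: For $n\ge 1$, $A_n$ denotes the finite integral symmetric relation algebra with atoms $1'$ (identity), $r$, $b_1,\dots,b_n$, all symmetric, in which a diversity cycle $xyz$ (with $x,y,z$ diversity atoms) is mandatory (i.e. $x;y\ge z$) if and only if it involves the atom $r$, and is forbidden (i.e. $x;y\cdot z=0$) otherwise. A representation of such a (simple) relation algebra over a set $U$ is an embedding into the full relation algebra $\langle \mathcal P(U\times U),\cup,{}^c,\circ,{}^{-1},\mathrm{Id}_U\rangle$. *)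

theory Defs
  imports Main
begin

datatype atom = IdA | RA | BA nat

definition atoms :: "nat \<Rightarrow> atom set" where
  "atoms n = {IdA, RA} \<union> BA ` {1..n}"

text \<open>Cycle rule for atoms x, y, z: z is below x;y.
  All atoms are symmetric. Identity: 1';y = y, x;1' = x, and x;y contains 1' iff x = y.
  A diversity cycle is allowed iff it involves r.\<close>
definition cyc :: "atom \<Rightarrow> atom \<Rightarrow> atom \<Rightarrow> bool" where
  "cyc x y z =
    (if x = IdA then z = y
     else if y = IdA then z = x
     else if z = IdA then x = y
     else (x = RA \<or> y = RA \<or> z = RA))"

definition A_comp :: "nat \<Rightarrow> atom set \<Rightarrow> atom set \<Rightarrow> atom set" where
  "A_comp n X Y = {z \<in> atoms n. \<exists>x\<in>X. \<exists>y\<in>Y. cyc x y z}"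

definition A_compl :: "nat \<Rightarrow> atom set \<Rightarrow> atom set" where
  "A_compl n X = atoms n - X"

definition A_conv :: "atom set \<Rightarrow> atom set" where
  "A_conv X = X"  \<comment> \<open>all atoms are symmetric\<close>

definition A_ident :: "atom set" where
  "A_ident = {IdA}"

definition representation :: "nat \<Rightarrow> 'u set \<Rightarrow> (atom set \<Rightarrow> ('u \<times> 'u) set) \<Rightarrow> bool" where
  "representation n U h \<longleftrightarrow>
     inj_on h (Pow (atoms n)) \<and>
     (\<forall>X\<in>Pow (atoms n). \<forall>Y\<in>Pow (atoms n). h (X \<union> Y) = h X \<union> h Y) \<and>
     (\<forall>X\<in>Pow (atoms n). h (A_compl n X) = (U \<times> U) - h X) \<and>
     (\<forall>X\<in>Pow (atoms n). \<forall>Y\<in>Pow (atoms n). h (A_comp n X Y) = h X O h Y) \<and>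
     (\<forall>X\<in>Pow (atoms n). h (A_conv X) = (h X)\<inverse>) \<and>
     h A_ident = Id_on U"

definition representable_over :: "nat \<Rightarrow> 'u set \<Rightarrow> bool" where
  "representable_over n U \<longleftrightarrow> (\<exists>h. representation n U h)"

text \<open>(Z/2Z)^m as a set: boolean vectors of length m.\<close>
definition Z2_pow :: "nat \<Rightarrow> bool list set" where
  "Z2_pow m = {v. length v = m}"

end

theory Submission
  imports Defs "HOL-Library.FuncSet" Complex_Main
begin

lemma bij_betw_Z2_pow_Pow: "bij_betw (\<lambda>xs. {i. i < m \<and> xs ! i}) (Z2_pow m) (Pow {..<m})"
proof (rule bij_betw_imageI)
  show "inj_on (\<lambda>xs. {i. i < m \<and> xs ! i}) (Z2_pow m)"
  proof (rule inj_onI)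
    fix xs ys assume "xs \<in> Z2_pow m" "ys \<in> Z2_pow m" and eq: "{i. i < m \<and> xs ! i} = {i. i < m \<and> ys ! i}"
    then have "length xs = m" "length ys = m" by (auto simp: Z2_pow_def)
    moreover have "xs ! i = ys ! i" if "i < m" for i
      using eq that by blast
    ultimately show "xs = ys" by (simp add: nth_equalityI)
  qed
  have "A \<in> (\<lambda>xs. {i. i < m \<and> xs ! i}) ` Z2_pow m" if "A \<subseteq> {..<m}" for A
  proof
    show "A = {i. i < m \<and> map (\<lambda>i. i \<in> A) [0..<m] ! i}" using that by auto
  qed (simp add: Z2_pow_def)
  then show "(\<lambda>xs. {i. i < m \<and> xs ! i}) ` Z2_pow m = Pow {..<m}" by auto
qed
lemma sym_diff_sym_diff_left: "sym_diff (sym_diff A B) (sym_diff A C) = sym_diff B C"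
  by blast

lemma sym_diff_cancel_left: "sym_diff A (sym_diff A B) = B"
  by blast

lemma sym_diff_cancel_right: "sym_diff (sym_diff A B) B = A"
  by blast

lemma representable_over_if_cyc_colouring:
  fixes \<phi> :: "'u \<Rightarrow> 'a set" and col :: "'a set \<Rightarrow> atom"
  assumes \<phi>: "bij_betw \<phi> U (Pow M)"
    and col_atoms: "\<And>A. A \<subseteq> M \<Longrightarrow> col A \<in> atoms n"
    and col_IdA: "\<And>A. A \<subseteq> M \<Longrightarrow> col A = IdA \<longleftrightarrow> A = {}"
    and col_surj: "atoms n \<subseteq> col ` Pow M"
    and col_cyc: "\<And>Z x y. Z \<subseteq> M \<Longrightarrow> x \<in> atoms n \<Longrightarrow> y \<in> atoms n \<Longrightarrow>
      (\<exists>A\<subseteq>M. col A = x \<and> col (sym_diff A Z) = y) \<longleftrightarrow> cyc x y (col Z)"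
  shows "representable_over n U"
proof -
  define h where "h X = {(u, v) \<in> U \<times> U. col (sym_diff (\<phi> u) (\<phi> v)) \<in> X}" for X
  have \<phi>_U: "\<phi> ` U = Pow M"
    using \<phi> by (simp add: bij_betw_def)
  have \<phi>_M: "\<phi> u \<subseteq> M" if "u \<in> U" for u
    using \<phi>_U that by blast
  have diff_M: "sym_diff (\<phi> u) (\<phi> v) \<subseteq> M" if "u \<in> U" "v \<in> U" for u v
    using \<phi>_M[OF that(1)] \<phi>_M[OF that(2)] by blast
  have translate: "\<exists>v\<in>U. sym_diff (\<phi> u) (\<phi> v) = A" if "u \<in> U" "A \<subseteq> M" for u A
  proof -
    have "sym_diff (\<phi> u) A \<in> \<phi> ` U"
      unfolding \<phi>_U using \<phi>_M[OF \<open>u \<in> U\<close>] \<open>A \<subseteq> M\<close> by blast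
    then obtain v where "v \<in> U" "\<phi> v = sym_diff (\<phi> u) A" by blast
    moreover have "sym_diff (\<phi> u) (sym_diff (\<phi> u) A) = A" by blast
    ultimately show ?thesis by metis
  qed
  obtain u\<^sub>0 where "u\<^sub>0 \<in> U"
    using \<phi>_U by (metis Pow_bottom imageE)
  have "inj_on h (Pow (atoms n))"
  proof (rule inj_onI)
    fix X Y assume X: "X \<in> Pow (atoms n)" and Y: "Y \<in> Pow (atoms n)" and "h X = h Y"
    have "a \<in> X \<longleftrightarrow> a \<in> Y" if "a \<in> atoms n" for a
    proof -
      from col_surj that have "a \<in> col ` Pow M" by (rule subsetD)
      then obtain A where "A \<subseteq> M" "col A = a" by auto
      obtain v where "v \<in> U" "sym_diff (\<phi> u\<^sub>0) (\<phi> v) = A"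
        using translate[OF \<open>u\<^sub>0 \<in> U\<close> \<open>A \<subseteq> M\<close>] by blast
      then have "(u\<^sub>0, v) \<in> h W \<longleftrightarrow> a \<in> W" for W
        using \<open>u\<^sub>0 \<in> U\<close> \<open>col A = a\<close> unfolding h_def by simp
      then show ?thesis
        using \<open>h X = h Y\<close> by metis
    qed
    then show "X = Y" using X Y by auto
  qed
  moreover have "h (X \<union> Y) = h X \<union> h Y" for X Y
    unfolding h_def by auto
  moreover have "h (A_compl n X) = U \<times> U - h X" for X
    unfolding h_def A_compl_def using col_atoms diff_M by auto
  moreover have "h (A_conv X) = (h X)\<inverse>" for X
  proof -
    have "sym_diff (\<phi> u) (\<phi> v) = sym_diff (\<phi> v) (\<phi> u)" for u v by blast
    then show ?thesis unfolding h_def A_conv_def by auto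
  qed
  moreover have "h A_ident = Id_on U"
  proof -
    have "sym_diff (\<phi> u) (\<phi> v) = {} \<longleftrightarrow> u = v" if "u \<in> U" "v \<in> U" for u v
      using bij_betw_imp_inj_on[OF \<phi>] that by (auto dest: inj_onD)
    then show ?thesis
      unfolding h_def A_ident_def Id_on_def using col_IdA diff_M by auto
  qed
  moreover have "h (A_comp n X Y) = h X O h Y" if XY: "X \<subseteq> atoms n" "Y \<subseteq> atoms n" for X Y
  proof (intro set_eqI iffI)
    fix p assume "p \<in> h (A_comp n X Y)"
    then obtain u w x y where p: "p = (u, w)" and uw: "u \<in> U" "w \<in> U" and "x \<in> X" "y \<in> Y"
      and "cyc x y (col (sym_diff (\<phi> u) (\<phi> w)))"
      unfolding h_def A_comp_def by blast
    then obtain A where A: "A \<subseteq> M" "col A = x" "col (sym_diff A (sym_diff (\<phi> u) (\<phi> w))) = y"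
      using col_cyc[OF diff_M[OF uw] subsetD[OF XY(1)] subsetD[OF XY(2)]] by blast
    obtain v where v: "v \<in> U" "sym_diff (\<phi> u) (\<phi> v) = A"
      using translate[OF uw(1) A(1)] by blast
    moreover have "sym_diff A (sym_diff (\<phi> u) (\<phi> w)) = sym_diff (\<phi> v) (\<phi> w)"
      using v(2) sym_diff_sym_diff_left by metis
    ultimately have "col (sym_diff (\<phi> u) (\<phi> v)) \<in> X" "col (sym_diff (\<phi> v) (\<phi> w)) \<in> Y"
      using A \<open>x \<in> X\<close> \<open>y \<in> Y\<close> by simp_all
    then show "p \<in> h X O h Y"
      using p uw v(1) unfolding h_def by blast
  next
    fix p assume "p \<in> h X O h Y"
    then obtain u v w where p: "p = (u, w)" and uvw: "u \<in> U" "v \<in> U" "w \<in> U"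
      and X: "col (sym_diff (\<phi> u) (\<phi> v)) \<in> X" and Y: "col (sym_diff (\<phi> v) (\<phi> w)) \<in> Y"
      unfolding h_def by blast
    have "\<exists>A\<subseteq>M. col A = col (sym_diff (\<phi> u) (\<phi> v))
        \<and> col (sym_diff A (sym_diff (\<phi> u) (\<phi> w))) = col (sym_diff (\<phi> v) (\<phi> w))"
      using diff_M[OF uvw(1,2)] sym_diff_sym_diff_left by metis
    then have "cyc (col (sym_diff (\<phi> u) (\<phi> v))) (col (sym_diff (\<phi> v) (\<phi> w)))
        (col (sym_diff (\<phi> u) (\<phi> w)))"
      using col_cyc[OF diff_M[of u w] subsetD[OF XY(1) X] subsetD[OF XY(2) Y]] uvw by blast
    then show "p \<in> h (A_comp n X Y)"
      using p uvw X Y col_atoms[OF diff_M[of u w]] unfolding h_def A_comp_def by blast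
  qed
  ultimately have "Defs.representation n U h"
    unfolding Defs.representation_def by auto
  then show ?thesis
    unfolding representable_over_def by blast
qed

lemma cyc_law_if_diversity_law:
  fixes col :: "'a set \<Rightarrow> atom"
  assumes col_IdA: "\<And>A. A \<subseteq> M \<Longrightarrow> col A = IdA \<longleftrightarrow> A = {}"
    and col_surj: "atoms n \<subseteq> col ` Pow M"
    and diversity: "\<And>Z x y. Z \<subseteq> M \<Longrightarrow> Z \<noteq> {} \<Longrightarrow> x \<in> atoms n - {IdA} \<Longrightarrow> y \<in> atoms n - {IdA} \<Longrightarrow>
      (\<exists>A\<subseteq>M. col A = x \<and> col (sym_diff A Z) = y) \<longleftrightarrow> x = RA \<or> y = RA \<or> col Z = RA"
    and Z: "Z \<subseteq> M" and x: "x \<in> atoms n" and y: "y \<in> atoms n"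
  shows "(\<exists>A\<subseteq>M. col A = x \<and> col (sym_diff A Z) = y) \<longleftrightarrow> cyc x y (col Z)"
proof -
  have col_empty: "col {} = IdA"
    using col_IdA by blast
  consider "x = IdA" | "y = IdA" | "Z = {}" | "x \<noteq> IdA" "y \<noteq> IdA" "Z \<noteq> {}"
    by blast
  then show ?thesis
  proof cases
    case 1
    have "col A = IdA \<and> col (sym_diff A Z) = y \<longleftrightarrow> A = {} \<and> col Z = y" if "A \<subseteq> M" for A
      using col_IdA[OF that] by auto
    then show ?thesis
      using 1 by (auto simp: cyc_def)
  next
    case 2
    have "col (sym_diff A Z) = IdA \<longleftrightarrow> A = Z" if "A \<subseteq> M" for A
      using col_IdA[of "sym_diff A Z"] that Z by blast
    then show ?thesis
      using 2 Z by (auto simp: cyc_def)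
  next
    case 3
    have "(\<exists>A\<subseteq>M. col A = x \<and> col A = y) \<longleftrightarrow> x = y"
      using col_surj x by blast
    then show ?thesis
      using 3 col_empty by (auto simp: cyc_def)
  next
    case 4
    then show ?thesis
      using diversity[OF Z _ _ _] x y col_IdA[OF Z] by (auto simp: cyc_def)
  qed
qed

definition small_sets :: "nat \<Rightarrow> nat set set" where
  "small_sets k = {A. A \<subseteq> {..<3*k+1} \<and> A \<noteq> {} \<and> card A \<le> 2*k}"

definition large_sets :: "nat \<Rightarrow> nat set set" where
  "large_sets k = {A. A \<subseteq> {..<3*k+1} \<and> 2*k < card A}"

definition atom_colouring :: "nat \<Rightarrow> (nat set \<Rightarrow> nat) \<Rightarrow> nat set \<Rightarrow> atom" where
  "atom_colouring k f A = (if A = {} then IdA else if card A \<le> 2*k then RA else BA (f A))"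

definition good_colouring :: "nat \<Rightarrow> nat \<Rightarrow> (nat set \<Rightarrow> nat) \<Rightarrow> bool" where
  "good_colouring k n f \<longleftrightarrow>
     f ` large_sets k \<subseteq> {1..n} \<and>
     (\<forall>Z\<in>small_sets k. \<forall>i\<in>{1..n}. \<forall>j\<in>{1..n}.
        \<exists>A\<in>large_sets k. sym_diff A Z \<in> large_sets k \<and> f A = i \<and> f (sym_diff A Z) = j) \<and>
     (\<forall>Z\<in>small_sets k. \<forall>j\<in>{1..n}. \<exists>W\<in>large_sets k. sym_diff W Z \<in> small_sets k \<and> f W = j)"

lemma good_colouringD:
  assumes "good_colouring k n f"
  shows good_colouring_range: "A \<in> large_sets k \<Longrightarrow> f A \<in> {1..n}"
    and good_colouring_pairs: "Z \<in> small_sets k \<Longrightarrow> i \<in> {1..n} \<Longrightarrow> j \<in> {1..n} \<Longrightarrow>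
      \<exists>A\<in>large_sets k. sym_diff A Z \<in> large_sets k \<and> f A = i \<and> f (sym_diff A Z) = j"
    and good_colouring_witness: "Z \<in> small_sets k \<Longrightarrow> j \<in> {1..n} \<Longrightarrow>
      \<exists>W\<in>large_sets k. sym_diff W Z \<in> small_sets k \<and> f W = j"
  using assms unfolding good_colouring_def by blast+

lemma subset_ground_cases:
  assumes "A \<subseteq> {..<3*k+1}"
  obtains "A = {}" | "A \<in> small_sets k" | "A \<in> large_sets k"
  using assms unfolding small_sets_def large_sets_def by force

lemma atom_colouring_small: "A \<in> small_sets k \<Longrightarrow> atom_colouring k f A = RA"
  by (simp add: atom_colouring_def small_sets_def)

lemma atom_colouring_large: "A \<in> large_sets k \<Longrightarrow> atom_colouring k f A = BA (f A)"
  by (auto simp: atom_colouring_def large_sets_def)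

lemma atom_colouring_eq_IdA_iff: "atom_colouring k f A = IdA \<longleftrightarrow> A = {}"
  by (simp add: atom_colouring_def)

lemma atom_colouring_eq_RA_iff:
  "A \<subseteq> {..<3*k+1} \<Longrightarrow> atom_colouring k f A = RA \<longleftrightarrow> A \<in> small_sets k"
  by (simp add: atom_colouring_def small_sets_def)

lemma atom_colouring_eq_BA_iff:
  "A \<subseteq> {..<3*k+1} \<Longrightarrow> atom_colouring k f A = BA i \<longleftrightarrow> A \<in> large_sets k \<and> f A = i"
  by (auto simp: atom_colouring_def large_sets_def)

lemma card_sym_diff_large_sets:
  assumes "A \<in> large_sets k" "B \<in> large_sets k"
  shows "card (sym_diff A B) \<le> 2*k"
proof -
  have AB: "A \<subseteq> {..<3*k+1}" "B \<subseteq> {..<3*k+1}" "2*k < card A" "2*k < card B"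
    using assms unfolding large_sets_def by auto
  then have fin: "finite A" "finite B"
    using finite_subset by blast+
  have "card (A \<union> B) \<le> 3*k+1"
    using card_mono[of "{..<3*k+1}" "A \<union> B"] AB by simp
  moreover have "card (A \<union> B) + card (A \<inter> B) = card A + card B"
    using card_Un_Int[OF fin] by simp
  moreover have "sym_diff A B = (A \<union> B) - (A \<inter> B)"
    by blast
  then have "card (sym_diff A B) = card (A \<union> B) - card (A \<inter> B)"
    using fin by (simp add: card_Diff_subset Int_lower1 le_supI1)
  ultimately show ?thesis
    using AB by linarith
qed

lemma small_sym_diff_small:
  assumes k: "1 \<le> k" and Z: "Z \<subseteq> {..<3*k+1}" "Z \<noteq> {}"
  shows "\<exists>A\<in>small_sets k. sym_diff A Z \<in> small_sets k"
proof -
  have "finite Z"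
    using Z finite_subset by blast
  have "card Z \<le> 3*k+1"
    using card_mono[OF _ Z(1)] by simp
  show ?thesis
  proof (cases "card Z = 1")
    case True
    then obtain z where z: "Z = {z}"
      by (rule card_1_singletonE)
    define t where "t = (if z = 0 then 1 else 0 :: nat)"
    have t: "t < 3*k+1" "t \<noteq> z"
      using k unfolding t_def by auto
    have "sym_diff {t} Z = {t, z}"
      using t(2) z by blast
    moreover have "card {t, z} \<le> 2 * k"
      using k by (simp add: card_insert_if)
    moreover have "{t} \<in> small_sets k" "{t, z} \<subseteq> {..<3*k+1}"
      using t k z Z unfolding small_sets_def by auto
    ultimately show ?thesis
      unfolding small_sets_def by (intro bexI[of _ "{t}"]) auto
  next
    case False
    moreover have "card Z \<noteq> 0"
      using Z(2) \<open>finite Z\<close> by simp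
    ultimately have "2 \<le> card Z"
      by linarith
    define h where "h = card Z div 2"
    have h: "1 \<le> h" "h \<le> 2 * k" "1 \<le> card Z - h" "card Z - h \<le> 2 * k"
      using \<open>2 \<le> card Z\<close> \<open>card Z \<le> 3*k+1\<close> k unfolding h_def by presburger+
    have "h \<le> card Z"
      unfolding h_def by simp
    then obtain A where A: "A \<subseteq> Z" "card A = h"
      by (rule obtain_subset_with_card_n)
    have "card (Z - A) = card Z - h"
      using A \<open>finite Z\<close> by (simp add: card_Diff_subset finite_subset)
    then have "card (Z - A) \<noteq> 0" "card (Z - A) \<le> 2 * k"
      using h(3,4) by simp_all
    then have "Z - A \<noteq> {}" "card (Z - A) \<le> 2 * k"
      by (metis card.empty, simp)
    moreover have "sym_diff A Z = Z - A"
      using A(1) by blast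
    ultimately have "sym_diff A Z \<in> small_sets k"
      using Z(1) unfolding small_sets_def by auto
    moreover have "A \<noteq> {}"
      using A(2) h(1) by auto
    then have "A \<in> small_sets k"
      using A h(2) Z(1) unfolding small_sets_def by auto
    ultimately show ?thesis
      by blast
  qed
qed

lemma good_colouring_large_with_small_diff:
  assumes f: "good_colouring k n f" and k: "1 \<le> k" and Z: "Z \<subseteq> {..<3*k+1}" "Z \<noteq> {}"
    and j: "j \<in> {1..n}"
  shows "\<exists>W\<in>large_sets k. sym_diff W Z \<in> small_sets k \<and> f W = j"
  using Z(1)
proof (cases rule: subset_ground_cases)
  case 2
  show ?thesis
    by (rule good_colouring_witness[OF f 2 j])
next
  case 3
  have "{0} \<in> small_sets k"
    using k unfolding small_sets_def by auto
  then obtain A where A: "A \<in> large_sets k" "sym_diff A {0} \<in> large_sets k"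
    "f A = j" "f (sym_diff A {0}) = j"
    using good_colouring_pairs[OF f _ j j] by blast
  \<comment> \<open>at least one of the two large sets of colour j differs from Z\<close>
  obtain W where W: "W \<in> large_sets k" "f W = j" "W \<noteq> Z"
    using A by (metis insertI1 Un_iff Diff_iff)
  then have "sym_diff W Z \<noteq> {}" 
    by blast
  moreover have "sym_diff W Z \<subseteq> {..<3*k+1}"
    using W(1) Z unfolding large_sets_def by blast
  ultimately have "sym_diff W Z \<in> small_sets k"
    using card_sym_diff_large_sets[OF W(1) 3] unfolding small_sets_def by blast
  then show ?thesis
    using W by blast
qed (use Z in blast)

lemma diversity_atomE:
  assumes "x \<in> atoms n - {IdA}"
  obtains "x = RA" | i where "i \<in> {1..n}" "x = BA i"
  using assms unfolding atoms_def by auto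

lemma atom_colouring_diversity_law:
  assumes f: "good_colouring k n f" and k: "1 \<le> k" and Z: "Z \<subseteq> {..<3*k+1}" "Z \<noteq> {}"
    and x: "x \<in> atoms n - {IdA}" and y: "y \<in> atoms n - {IdA}"
  shows "(\<exists>A\<subseteq>{..<3*k+1}. atom_colouring k f A = x \<and> atom_colouring k f (sym_diff A Z) = y)
    \<longleftrightarrow> x = RA \<or> y = RA \<or> atom_colouring k f Z = RA"
    (is "?realised \<longleftrightarrow> _")
proof
  have sym_diff_M: "sym_diff A Z \<subseteq> {..<3*k+1}" if "A \<subseteq> {..<3*k+1}" for A
    using that Z by blast
  assume ?realised
  then obtain A where A: "A \<subseteq> {..<3*k+1}" "atom_colouring k f A = x"
    "atom_colouring k f (sym_diff A Z) = y"
    by blast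
  show "x = RA \<or> y = RA \<or> atom_colouring k f Z = RA"
  proof (rule ccontr)
    assume "\<not> ?thesis"
    then have "x \<noteq> RA" "y \<noteq> RA" "Z \<notin> small_sets k"
      using atom_colouring_eq_RA_iff[OF Z(1)] by simp_all
    then obtain i j where "x = BA i" "y = BA j"
      using x y by (metis diversity_atomE)
    then have "A \<in> large_sets k" "sym_diff A Z \<in> large_sets k"
      using A atom_colouring_eq_BA_iff[OF A(1)] atom_colouring_eq_BA_iff[OF sym_diff_M[OF A(1)]]
      by simp_all
    then have "card (sym_diff A (sym_diff A Z)) \<le> 2*k"
      by (rule card_sym_diff_large_sets)
    then show False
      using \<open>Z \<notin> small_sets k\<close> Z unfolding sym_diff_cancel_left small_sets_def by blast
  qed
next
  let ?col = "atom_colouring k f"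
  have M: "A \<subseteq> {..<3*k+1}" if "A \<in> large_sets k \<or> A \<in> small_sets k" for A
    using that unfolding large_sets_def small_sets_def by blast
  have realise: "?realised" if "A \<in> large_sets k \<or> A \<in> small_sets k" "?col A = x"
    "?col (sym_diff A Z) = y" for A
    using that M by blast
  assume RA: "x = RA \<or> y = RA \<or> ?col Z = RA"
  show ?realised
  proof (cases rule: diversity_atomE[OF x]; cases rule: diversity_atomE[OF y])
    assume "x = RA" "y = RA"
    obtain A where "A \<in> small_sets k" "sym_diff A Z \<in> small_sets k"
      using small_sym_diff_small[OF k Z] by blast
    then show ?realised
      using \<open>x = RA\<close> \<open>y = RA\<close> by (intro realise[of A]) (simp_all add: atom_colouring_small)
  next
    fix j assume "x = RA" "j \<in> {1..n}" "y = BA j"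
    obtain W where "W \<in> large_sets k" "sym_diff W Z \<in> small_sets k" "f W = j"
      using good_colouring_large_with_small_diff[OF f k Z \<open>j \<in> {1..n}\<close>] by blast
    moreover have "sym_diff (sym_diff W Z) Z = W"
      by blast
    ultimately show ?realised
      using \<open>x = RA\<close> \<open>y = BA j\<close>
      by (intro realise[of "sym_diff W Z"]) (simp_all add: atom_colouring_small atom_colouring_large)
  next
    fix i assume "i \<in> {1..n}" "x = BA i" "y = RA"
    obtain W where "W \<in> large_sets k" "sym_diff W Z \<in> small_sets k" "f W = i"
      using good_colouring_large_with_small_diff[OF f k Z \<open>i \<in> {1..n}\<close>] by blast
    then show ?realised
      using \<open>x = BA i\<close> \<open>y = RA\<close>
      by (intro realise[of W]) (simp_all add: atom_colouring_small atom_colouring_large)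
  next
    fix i j assume "i \<in> {1..n}" "x = BA i" "j \<in> {1..n}" "y = BA j"
    then have "Z \<in> small_sets k"
      using RA atom_colouring_eq_RA_iff[OF Z(1)] by simp
    then obtain A where "A \<in> large_sets k" "sym_diff A Z \<in> large_sets k" "f A = i"
      "f (sym_diff A Z) = j"
      using good_colouring_pairs[OF f _ \<open>i \<in> {1..n}\<close> \<open>j \<in> {1..n}\<close>] by blast
    then show ?realised
      using \<open>x = BA i\<close> \<open>y = BA j\<close>
      by (intro realise[of A]) (simp_all add: atom_colouring_large)
  qed
qed

lemma representable_over_if_good_colouring:
  assumes f: "good_colouring k n f" and k: "1 \<le> k"
  shows "representable_over n (Z2_pow (3*k+1))"
proof (rule representable_over_if_cyc_colouring[OF bij_betw_Z2_pow_Pow])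
  let ?col = "atom_colouring k f" and ?M = "{..<3*k+1}"
  show col_IdA: "?col A = IdA \<longleftrightarrow> A = {}" for A
    by (rule atom_colouring_eq_IdA_iff)
  show "?col A \<in> atoms n" if "A \<subseteq> ?M" for A
    using that
  proof (cases rule: subset_ground_cases)
    case 3
    then have "f A \<in> {1..n}"
      by (rule good_colouring_range[OF f])
    moreover have "?col A = BA (f A)"
      using 3 unfolding atom_colouring_def large_sets_def by auto
    ultimately show ?thesis
      unfolding atoms_def by simp
  qed (auto simp: atom_colouring_def small_sets_def atoms_def)
  have "{0} \<in> small_sets k"
    using k unfolding small_sets_def by auto
  have "BA i \<in> ?col ` Pow ?M" if i: "i \<in> {1..n}" for i
  proof -
    obtain A where "A \<in> large_sets k" "f A = i"
      using good_colouring_pairs[OF f \<open>{0} \<in> small_sets k\<close> i i] by blast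
    moreover have "A \<subseteq> ?M"
      using \<open>A \<in> large_sets k\<close> unfolding large_sets_def by blast
    ultimately have "?col A = BA i"
      by (simp add: atom_colouring_eq_BA_iff)
    then show ?thesis
      using \<open>A \<subseteq> ?M\<close> by (intro image_eqI[of _ _ A]) simp_all
  qed
  moreover have "IdA \<in> ?col ` Pow ?M"
    by (rule image_eqI[of _ _ "{}"]) (simp_all add: atom_colouring_def)
  moreover have "RA \<in> ?col ` Pow ?M"
    by (rule image_eqI[of _ _ "{0}"])
      (use k in \<open>simp_all add: atom_colouring_def\<close>)
  ultimately have surj: "atoms n \<subseteq> ?col ` Pow ?M"
    unfolding atoms_def by blast
  then show "atoms n \<subseteq> ?col ` Pow ?M" .
  show "(\<exists>A\<subseteq>?M. ?col A = x \<and> ?col (sym_diff A Z) = y) \<longleftrightarrow> cyc x y (?col Z)"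
    if "Z \<subseteq> ?M" "x \<in> atoms n" "y \<in> atoms n" for Z x y
    by (rule cyc_law_if_diversity_law[OF atom_colouring_eq_IdA_iff surj
          atom_colouring_diversity_law[OF f k] that])
qed

lemma central_binomial_ge_pow3: "3 ^ l \<le> 3 * (2 * l choose l)"
proof (induction l)
  case 0
  show ?case by simp
next
  case (Suc l)
  have "Suc (2*l) choose Suc l = Suc (2*l) choose l"
    using binomial_symmetric[of l "Suc (2*l)"] by simp
  then have "Suc l * (2 * Suc l choose Suc l) = 2 * (Suc l * (Suc (2*l) choose Suc l))"
    using Suc_times_binomial[of l "Suc (2*l)"] by simp
  also have "Suc l * (Suc (2*l) choose Suc l) = Suc (2*l) * (2*l choose l)"
    by (rule Suc_times_binomial)
  finally have rec: "Suc l * (2 * Suc l choose Suc l) = 2 * Suc (2*l) * (2*l choose l)"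
    by simp
  show ?case
  proof (cases "l = 0")
    case False
    then have "3 * Suc l * (2*l choose l) \<le> 2 * Suc (2*l) * (2*l choose l)"
      by (intro mult_le_mono1) arith
    then have "Suc l * (3 * (2*l choose l)) \<le> Suc l * (2 * Suc l choose Suc l)"
      unfolding rec by (metis mult.assoc mult.commute)
    then have "3 * (2*l choose l) \<le> 2 * Suc l choose Suc l"
      by (metis mult_le_cancel1 zero_less_Suc)
    then show ?thesis
      using Suc.IH by simp
  qed simp
qed

lemma binomial_ge_pow3:
  assumes "l \<le> j" "j + l \<le> m"
  shows "3 ^ l \<le> 3 * (m choose j)"
proof -
  have "2 * l choose l \<le> (j + l) choose l"
    using assms by (intro binomial_right_mono) simp
  also have "\<dots> = (j + l) choose j"
    using binomial_symmetric[of l "j + l"] by simp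
  also have "\<dots> \<le> m choose j"
    using assms by (intro binomial_right_mono)
  finally show ?thesis
    using central_binomial_ge_pow3[of l] by simp
qed

lemma card_subsets_by_traces:
  assumes "finite M" "Z \<subseteq> M"
  shows "card {A. A \<subseteq> M \<and> card (A \<inter> Z) = a \<and> card (A - Z) = b}
    = (card Z choose a) * (card (M - Z) choose b)"
proof -
  have "bij_betw (\<lambda>A. (A \<inter> Z, A - Z)) {A. A \<subseteq> M \<and> card (A \<inter> Z) = a \<and> card (A - Z) = b}
      ({P. P \<subseteq> Z \<and> card P = a} \<times> {Q. Q \<subseteq> M - Z \<and> card Q = b})"
  proof (rule bij_betw_byWitness[where f' = "\<lambda>(P, Q). P \<union> Q"])
    show "(\<lambda>A. (A \<inter> Z, A - Z)) ` {A. A \<subseteq> M \<and> card (A \<inter> Z) = a \<and> card (A - Z) = b}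
        \<subseteq> {P. P \<subseteq> Z \<and> card P = a} \<times> {Q. Q \<subseteq> M - Z \<and> card Q = b}"
      by auto
    have "(P \<union> Q) \<inter> Z = P" "P \<union> Q - Z = Q" if "P \<subseteq> Z" "Q \<subseteq> M - Z" for P Q
      using that by auto
    then show "(\<lambda>(P, Q). P \<union> Q) ` ({P. P \<subseteq> Z \<and> card P = a} \<times> {Q. Q \<subseteq> M - Z \<and> card Q = b})
        \<subseteq> {A. A \<subseteq> M \<and> card (A \<inter> Z) = a \<and> card (A - Z) = b}"
      using assms(2) by auto
  qed auto
  then show ?thesis
    using assms by (simp add: bij_betw_same_card card_cartesian_product n_subsets finite_subset)
qed

lemma card_sym_diff_by_traces:
  assumes "finite A" "finite Z"
  shows "card (sym_diff A Z) = card (A - Z) + (card Z - card (A \<inter> Z))"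
proof -
  have "card (sym_diff A Z) = card (A - Z) + card (Z - A)"
    using assms by (intro card_Un_disjoint) auto
  moreover have "card (Z - A) = card Z - card (A \<inter> Z)"
    using assms by (simp add: card_Diff_subset_Int Int_commute)
  ultimately show ?thesis
    by simp
qed

lemma small_sets_card:
  assumes "Z \<in> small_sets k"
  shows "Z \<subseteq> {..<3*k+1}" "finite Z" "1 \<le> card Z" "card Z \<le> 2*k"
  using assms finite_subset[of Z "{..<3*k+1}"] unfolding small_sets_def
  by (auto simp: Suc_le_eq card_gt_0_iff)

lemma card_large_pairs_avoiding_point:
  assumes Z: "Z \<in> small_sets k" and z: "z \<in> Z"
  shows "3 ^ (k - 1) \<le> 9 * card {A \<in> large_sets k. sym_diff A Z \<in> large_sets k \<and> z \<notin> A}"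
proof -
  let ?M = "{..<3*k+1}" and ?c = "card Z"
  define a where "a = ?c div 2"
  define b where "b = 2*k + 1 - a"
  note Z' = small_sets_card[OF Z]
  have a: "2 * a \<le> ?c" "?c \<le> 2 * a + 1"
    unfolding a_def by presburger+
  define \<L> where "\<L> = {A. A \<subseteq> ?M - {z} \<and> card (A \<inter> (Z - {z})) = a \<and> card (A - (Z - {z})) = b}"
  have "?M - {z} - (Z - {z}) = ?M - Z"
    using z by blast
  then have "card (?M - {z} - (Z - {z})) = 3*k + 1 - ?c"
    using Z' by (simp add: card_Diff_subset)
  then have card_\<L>: "card \<L> = ((?c - 1) choose a) * ((3*k + 1 - ?c) choose b)"
    unfolding \<L>_def using card_subsets_by_traces[of "?M - {z}" "Z - {z}" a b] Z' z by auto
  have "(?c - 1 - a) + (k + a - ?c) = k - 1"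
    using Z' a by linarith
  then have "(3::nat) ^ (k - 1) = 3 ^ (?c - 1 - a) * 3 ^ (k + a - ?c)"
    by (metis power_add)
  also have "\<dots> \<le> (3 * ((?c - 1) choose a)) * (3 * ((3*k + 1 - ?c) choose b))"
    using Z' using a unfolding b_def by (intro mult_le_mono binomial_ge_pow3) linarith+
  also have "\<dots> = 9 * card \<L>"
    unfolding card_\<L> by simp
  finally have "3 ^ (k - 1) \<le> 9 * card \<L>" .
  moreover have "\<L> \<subseteq> {A \<in> large_sets k. sym_diff A Z \<in> large_sets k \<and> z \<notin> A}"
  proof
    fix A assume "A \<in> \<L>"
    then have "A \<subseteq> ?M" "z \<notin> A" "card (A \<inter> (Z - {z})) = a" "card (A - (Z - {z})) = b"
      unfolding \<L>_def by auto
    moreover from \<open>z \<notin> A\<close> have "A \<inter> (Z - {z}) = A \<inter> Z" "A - (Z - {z}) = A - Z"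
      by auto
    ultimately have A: "A \<subseteq> ?M" "z \<notin> A" "card (A \<inter> Z) = a" "card (A - Z) = b"
      by simp_all
    have "finite A"
      using A(1) finite_subset by blast
    then have "card A = a + b" "card (sym_diff A Z) = b + (?c - a)"
      using A card_Int_Diff[of A Z] card_sym_diff_by_traces[of A Z] Z' by auto
    then show "A \<in> {A \<in> large_sets k. sym_diff A Z \<in> large_sets k \<and> z \<notin> A}"
      using A Z' a unfolding large_sets_def b_def by auto
  qed
  then have "card \<L> \<le> card {A \<in> large_sets k. sym_diff A Z \<in> large_sets k \<and> z \<notin> A}"
    by (rule card_mono[rotated]) (auto simp: large_sets_def intro: finite_subset)
  ultimately show ?thesis
    by linarith
qed

lemma card_large_with_small_diff:
  assumes Z: "Z \<in> small_sets k"
  shows "3 ^ k \<le> 9 * card {W \<in> large_sets k. sym_diff W Z \<in> small_sets k}"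
proof -
  let ?M = "{..<3*k+1}" and ?c = "card Z"
  define p where "p = (?c - 1) div 2"
  define a where "a = ?c - p"
  define b where "b = 2*k + 1 - a"
  note Z' = small_sets_card[OF Z]
  have p: "2 * p + 1 \<le> ?c" "?c \<le> 2 * p + 2"
    using Z' unfolding p_def by presburger+
  define \<L> where "\<L> = {W. W \<subseteq> ?M \<and> card (W \<inter> Z) = a \<and> card (W - Z) = b}"
  have "card (?M - Z) = 3*k + 1 - ?c"
    using Z' by (simp add: card_Diff_subset)
  then have card_\<L>: "card \<L> = (?c choose a) * ((3*k + 1 - ?c) choose b)"
    unfolding \<L>_def using card_subsets_by_traces[of ?M Z a b] Z' by simp
  have "(3::nat) ^ k = 3 ^ p * 3 ^ (k - p)"
    using Z' p by (simp flip: power_add)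
  also have "\<dots> \<le> (3 * (?c choose a)) * (3 * ((3*k + 1 - ?c) choose b))"
    using Z' p unfolding a_def b_def by (intro mult_le_mono binomial_ge_pow3) linarith+
  also have "\<dots> = 9 * card \<L>"
    unfolding card_\<L> by simp
  finally have "3 ^ k \<le> 9 * card \<L>" .
  moreover have "\<L> \<subseteq> {W \<in> large_sets k. sym_diff W Z \<in> small_sets k}"
  proof
    fix W assume "W \<in> \<L>"
    then have W: "W \<subseteq> ?M" "card (W \<inter> Z) = a" "card (W - Z) = b"
      unfolding \<L>_def by auto
    have "finite W"
      using W(1) finite_subset by blast
    then have "card W = a + b" "card (sym_diff W Z) = b + (?c - a)"
      using W card_Int_Diff[of W Z] card_sym_diff_by_traces[of W Z] Z' by auto
    moreover have "sym_diff W Z \<noteq> {}"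
      using calculation(2) Z' p unfolding a_def b_def by auto
    ultimately show "W \<in> {W \<in> large_sets k. sym_diff W Z \<in> small_sets k}"
      using W Z' p unfolding large_sets_def small_sets_def a_def b_def by auto
  qed
  then have "card \<L> \<le> card {W \<in> large_sets k. sym_diff W Z \<in> small_sets k}"
    by (rule card_mono[rotated]) (auto simp: large_sets_def intro: finite_subset)
  ultimately show ?thesis
    by linarith
qed

lemma power_mult_one_minus_inverse:
  fixes x :: real
  assumes "x \<noteq> 0" "d * a \<le> s"
  shows "(x ^ d - 1) ^ a * x ^ (s - d * a) = x ^ s * (1 - 1 / x ^ d) ^ a"
proof -
  have "x ^ d - 1 = x ^ d * (1 - 1 / x ^ d)"
    using assms(1) by (simp add: field_simps)
  then have "(x ^ d - 1) ^ a * x ^ (s - d * a) = (x ^ (d * a) * x ^ (s - d * a)) * (1 - 1 / x ^ d) ^ a"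
    by (simp add: power_mult_distrib power_mult)
  also have "x ^ (d * a) * x ^ (s - d * a) = x ^ s"
    using assms(2) by (simp flip: power_add)
  finally show ?thesis .
qed

lemma card_PiE_avoiding_pairs:
  fixes \<sigma> :: "'a \<Rightarrow> 'a"
  assumes S: "finite S" and N: "finite N" "i \<in> N" "j \<in> N"
    and \<A>: "\<A> \<subseteq> S" "\<sigma> ` \<A> \<subseteq> S" "inj_on \<sigma> \<A>" "\<A> \<inter> \<sigma> ` \<A> = {}"
  shows "real (card {f \<in> S \<rightarrow>\<^sub>E N. \<forall>a\<in>\<A>. f a \<noteq> i \<or> f (\<sigma> a) \<noteq> j})
    \<le> real (card N) ^ card S * (1 - 1 / real (card N) ^ 2) ^ card \<A>"
proof -
  let ?E = "{f \<in> S \<rightarrow>\<^sub>E N. \<forall>a\<in>\<A>. f a \<noteq> i \<or> f (\<sigma> a) \<noteq> j}"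
  let ?R = "S - (\<A> \<union> \<sigma> ` \<A>)"
  let ?T = "(\<A> \<rightarrow>\<^sub>E N \<times> N - {(i, j)}) \<times> (?R \<rightarrow>\<^sub>E N)"
  define \<Phi> where "\<Phi> f = (restrict (\<lambda>a. (f a, f (\<sigma> a))) \<A>, restrict f ?R)" for f :: "'a \<Rightarrow> 'b"
  have img: "\<Phi> ` ?E \<subseteq> ?T"
  proof (rule image_subsetI)
    fix f assume "f \<in> ?E"
    have "f a \<in> N" if "a \<in> S" for a
      using \<open>f \<in> ?E\<close> that by (blast intro: PiE_mem)
    then show "\<Phi> f \<in> ?T"
      using \<open>f \<in> ?E\<close> \<A>(1,2) unfolding \<Phi>_def by (auto simp: restrict_PiE_iff)
  qed
  have inj: "inj_on \<Phi> ?E"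
  proof (rule inj_onI)
    fix f g assume f: "f \<in> ?E" and g: "g \<in> ?E" and "\<Phi> f = \<Phi> g"
    then have pairs: "restrict (\<lambda>a. (f a, f (\<sigma> a))) \<A> = restrict (\<lambda>a. (g a, g (\<sigma> a))) \<A>"
      and rest: "restrict f ?R = restrict g ?R"
      unfolding \<Phi>_def by simp_all
    have "f a = g a \<and> f (\<sigma> a) = g (\<sigma> a)" if "a \<in> \<A>" for a
      using fun_cong[OF pairs, of a] that by simp
    moreover have "f x = g x" if "x \<in> ?R" for x
      using fun_cong[OF rest, of x] that by simp
    ultimately have "f x = g x" if "x \<in> S" for x
      using that by blast
    then show "f = g"
      using f g by (intro PiE_ext[of f S "\<lambda>_. N" g]) auto
  qed
  have "finite \<A>"
    using \<A>(1) S finite_subset by blast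
  then have "finite ?T"
    using S N by (intro finite_cartesian_product finite_PiE) auto
  with inj img have "card ?E \<le> card ?T"
    by (rule card_inj_on_le)
  moreover have "card (\<A> \<union> \<sigma> ` \<A>) = 2 * card \<A>"
    using \<open>finite \<A>\<close> \<A>(4) card_Un_disjoint[of \<A> "\<sigma> ` \<A>"] card_image[OF \<A>(3)] by simp
  then have "card ?R = card S - 2 * card \<A>" "2 * card \<A> \<le> card S"
    using \<A> S card_mono[of S "\<A> \<union> \<sigma> ` \<A>"] by (simp_all add: card_Diff_subset finite_subset)
  moreover have "card (N \<times> N - {(i, j)}) = card N ^ 2 - 1"
    using N by (simp add: card_cartesian_product power2_eq_square)
  ultimately have "card ?E \<le> (card N ^ 2 - 1) ^ card \<A> * card N ^ (card S - 2 * card \<A>)"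
    using S \<A> by (simp add: card_cartesian_product card_PiE finite_subset)
  then have "real (card ?E) \<le> real ((card N ^ 2 - 1) ^ card \<A> * card N ^ (card S - 2 * card \<A>))"
    by (simp only: of_nat_le_iff)
  also have "\<dots> = (real (card N) ^ 2 - 1) ^ card \<A> * real (card N) ^ (card S - 2 * card \<A>)"
  proof -
    have "1 \<le> card N ^ 2"
      using N by (auto simp: Suc_le_eq card_gt_0_iff)
    then show ?thesis
      by (simp add: of_nat_diff)
  qed
  also have "\<dots> = real (card N) ^ card S * (1 - 1 / real (card N) ^ 2) ^ card \<A>"
    using N \<open>2 * card \<A> \<le> card S\<close> by (intro power_mult_one_minus_inverse) (auto simp: card_gt_0_iff)
  finally show ?thesis .
qed

lemma card_PiE_avoiding_value:
  assumes S: "finite S" "G \<subseteq> S" and N: "finite N" "j \<in> N"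
  shows "real (card {f \<in> S \<rightarrow>\<^sub>E N. \<forall>x\<in>G. f x \<noteq> j})
    = real (card N) ^ card S * (1 - 1 / real (card N)) ^ card G"
proof -
  have "1 \<le> card N"
    using N by (auto simp: Suc_le_eq card_gt_0_iff)
  have "{f \<in> S \<rightarrow>\<^sub>E N. \<forall>x\<in>G. f x \<noteq> j} = PiE S (\<lambda>x. if x \<in> G then N - {j} else N)"
    using S(2) by (auto simp: PiE_def Pi_def split: if_splits)
  then have "card {f \<in> S \<rightarrow>\<^sub>E N. \<forall>x\<in>G. f x \<noteq> j} = (\<Prod>x\<in>S. card (if x \<in> G then N - {j} else N))"
    using S(1) by (simp add: card_PiE)
  also have "\<dots> = (\<Prod>x\<in>S. if x \<in> G then card N - 1 else card N)"
    using N by (intro prod.cong) auto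
  also have "\<dots> = (card N - 1) ^ card G * card N ^ (card S - card G)"
    using S by (simp add: prod.If_cases Int_absorb1 Diff_eq[symmetric] card_Diff_subset finite_subset)
  finally have "real (card {f \<in> S \<rightarrow>\<^sub>E N. \<forall>x\<in>G. f x \<noteq> j})
      = real ((card N - 1) ^ card G * card N ^ (card S - card G))"
    by (simp only:)
  also have "\<dots> = (real (card N) ^ 1 - 1) ^ card G * real (card N) ^ (card S - 1 * card G)"
    using \<open>1 \<le> card N\<close> by (simp add: of_nat_diff)
  also have "\<dots> = real (card N) ^ card S * (1 - 1 / real (card N) ^ 1) ^ card G"
    using S N card_mono[OF S(1,2)] by (intro power_mult_one_minus_inverse) auto
  finally show ?thesis
    by simp
qed

lemma card_UN_le_card_mult:
  assumes "finite I" "\<And>x. x \<in> I \<Longrightarrow> real (card (E x)) \<le> b"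
  shows "real (card (\<Union>x\<in>I. E x)) \<le> real (card I) * b"
proof -
  have "real (card (\<Union>x\<in>I. E x)) \<le> (\<Sum>x\<in>I. real (card (E x)))"
    using card_UN_le[OF assms(1), of E] by (simp flip: of_nat_sum)
  also have "\<dots> \<le> real (card I) * b"
    using assms(2) by (rule sum_bounded_above)
  finally show ?thesis .
qed

lemma one_minus_inverse_power_le_half:
  assumes "1 \<le> m"
  shows "(1 - 1 / real m) ^ m \<le> 1 / 2"
proof -
  have "(1 - 1 / real m) ^ m \<le> exp (- 1)"
    using exp_ge_one_minus_x_over_n_power_n[of 1 m] assms by simp
  also have "\<dots> \<le> 1 / 2"
    using exp_ge_add_one_self[of 1] by (simp add: exp_minus field_simps)
  finally show ?thesis .
qed

lemma square_less_power2: "5 \<le> k \<Longrightarrow> k ^ 2 < (2::nat) ^ k"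
proof (induction k rule: nat_induct_at_least)
  case base
  show ?case by simp
next
  case (Suc k)
  have "5 * k \<le> k * k"
    using Suc.hyps by (intro mult_le_mono1)
  moreover have "Suc k ^ 2 = k * k + 2 * k + 1" "k ^ 2 = k * k"
    by (simp_all add: power2_eq_square)
  ultimately have "Suc k ^ 2 \<le> 2 * k ^ 2"
    using Suc.hyps by linarith
  then show ?case
    using Suc.IH by simp
qed

lemma cubic_le_power3: "14 \<le> k \<Longrightarrow> (4 * k + 2) * k ^ 2 \<le> (3::nat) ^ (k - 3)"
proof (induction k rule: nat_induct_at_least)
  case base
  show ?case by simp
next
  case (Suc k)
  have "14 * k ^ 2 \<le> k ^ 3" "14 * k \<le> k ^ 2"
    using Suc.hyps mult_le_mono1[of 14 k "k ^ 2"] mult_le_mono1[of 14 k k]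
    by (simp_all add: power2_eq_square power3_eq_cube)
  moreover have "(4 * Suc k + 2) * Suc k ^ 2 = 4 * k ^ 3 + 14 * k ^ 2 + 16 * k + 6"
    "3 * ((4 * k + 2) * k ^ 2) = 12 * k ^ 3 + 6 * k ^ 2"
    by (simp_all add: power2_eq_square power3_eq_cube algebra_simps)
  ultimately have "(4 * Suc k + 2) * Suc k ^ 2 \<le> 3 * ((4 * k + 2) * k ^ 2)"
    using Suc.hyps by linarith
  also have "\<dots> \<le> 3 * 3 ^ (k - 3)"
    using Suc.IH by simp
  also have "\<dots> = 3 ^ (Suc k - 3)"
    using Suc.hyps by (simp flip: power_Suc add: Suc_diff_le)
  finally show ?case .
qed

lemma union_bound_lt_one:
  assumes k: "14 \<le> k" and n: "1 \<le> n" "n \<le> k" and L: "L \<le> (2::nat) ^ (3 * k + 1)"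
  shows "real L * (real n ^ 2 * (1 - 1 / real n ^ 2) ^ 3 ^ (k - 3) + real n * (1 - 1 / real n) ^ 3 ^ (k - 3)) < 1"
proof -
  define D where "D = (3::nat) ^ (k - 3)"
  define q where "q = 1 - 1 / real k ^ 2"
  have b: "0 \<le> 1 - 1 / real n" "1 - 1 / real n \<le> 1 - 1 / real n ^ 2"
    using n by (auto simp: field_simps power2_eq_square)
  have a: "1 - 1 / real n ^ 2 \<le> q" "q \<le> 1"
    using n unfolding q_def by (auto simp: field_simps power_mono)
  have "q ^ (k ^ 2) \<le> 1 / 2"
    using one_minus_inverse_power_le_half[of "k ^ 2"] k unfolding q_def by simp
  have "q ^ D \<le> q ^ ((4 * k + 2) * k ^ 2)"
    using cubic_le_power3[OF k] b a unfolding D_def by (intro power_decreasing) auto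
  also have "\<dots> = (q ^ (k ^ 2)) ^ (4 * k + 2)"
    by (metis power_mult mult.commute)
  also have "\<dots> \<le> (1 / 2) ^ (4 * k + 2)"
    using \<open>q ^ (k ^ 2) \<le> 1 / 2\<close> b a by (intro power_mono) auto
  finally have qD: "q ^ D \<le> (1 / 2) ^ (4 * k + 2)" .
  have "(1 - 1 / real n ^ 2) ^ D \<le> q ^ D"
    using a b by (intro power_mono) auto
  with qD have aD: "(1 - 1 / real n ^ 2) ^ D \<le> (1 / 2) ^ (4 * k + 2)"
    by linarith
  have "(1 - 1 / real n) ^ D \<le> (1 - 1 / real n ^ 2) ^ D"
    using b by (intro power_mono) auto
  with aD have bD: "(1 - 1 / real n) ^ D \<le> (1 / 2) ^ (4 * k + 2)"
    by linarith
  have "real n \<le> real n ^ 2"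
    using n by (simp add: power2_eq_square)
  moreover have "real n ^ 2 \<le> real k ^ 2"
    using n by (intro power_mono) simp_all
  ultimately have "real n ^ 2 + real n \<le> 2 * real k ^ 2"
    by linarith
  have "real L * (real n ^ 2 * (1 - 1 / real n ^ 2) ^ D + real n * (1 - 1 / real n) ^ D)
      \<le> real L * (real n ^ 2 * (1 / 2) ^ (4 * k + 2) + real n * (1 / 2) ^ (4 * k + 2))"
    using aD bD by (intro mult_left_mono add_mono) auto
  also have "\<dots> = real L * ((real n ^ 2 + real n) * (1 / 2) ^ (4 * k + 2))"
    by (simp add: algebra_simps)
  also have "\<dots> \<le> 2 ^ (3 * k + 1) * (2 * real k ^ 2 * (1 / 2) ^ (4 * k + 2))"
  proof (rule mult_mono)
    have "real L \<le> real ((2::nat) ^ (3 * k + 1))"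
      using L by (simp only: of_nat_le_iff)
    then show "real L \<le> 2 ^ (3 * k + 1)"
      by simp
    show "(real n ^ 2 + real n) * (1 / 2) ^ (4 * k + 2) \<le> 2 * real k ^ 2 * (1 / 2) ^ (4 * k + 2)"
      using \<open>real n ^ 2 + real n \<le> 2 * real k ^ 2\<close> by (rule mult_right_mono) simp
  qed simp_all
  also have "\<dots> = real (k ^ 2) * ((2 * (1 / 2)) ^ (3 * k + 2) * (1 / 2) ^ k)"
  proof -
    have "(1 / 2 :: real) ^ (4 * k + 2) = (1 / 2) ^ (3 * k + 2) * (1 / 2) ^ k"
      by (simp flip: power_add)
    then show ?thesis
      unfolding power_mult_distrib by (simp add: mult_ac)
  qed
  also have "\<dots> = real (k ^ 2) / 2 ^ k"
    by (simp add: power_one_over)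
  also have "\<dots> < 1"
  proof -
    have "real (k ^ 2) < real ((2::nat) ^ k)"
      using square_less_power2[of k] k by (simp only: of_nat_less_iff)
    then show ?thesis
      by simp
  qed
  finally show ?thesis
    unfolding D_def .
qed

lemma pair_family_exists:
  assumes k: "3 \<le> k" and Z: "Z \<in> small_sets k"
  shows "\<exists>\<A>. \<A> \<subseteq> large_sets k \<and> card \<A> = 3 ^ (k - 3)
    \<and> (\<forall>A\<in>\<A>. sym_diff A Z \<in> large_sets k \<and> sym_diff A Z \<notin> \<A>)"
proof -
  obtain z where z: "z \<in> Z"
    using Z unfolding small_sets_def by blast
  let ?P = "{A \<in> large_sets k. sym_diff A Z \<in> large_sets k \<and> z \<notin> A}"
  have "k - 1 = (k - 3) + 2"
    using k by simp
  then have "(3::nat) ^ (k - 1) = 9 * 3 ^ (k - 3)"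
    by (simp add: power_add)
  then have "3 ^ (k - 3) \<le> card ?P"
    using card_large_pairs_avoiding_point[OF Z z] by simp
  then obtain \<A> where \<A>: "\<A> \<subseteq> ?P" "card \<A> = 3 ^ (k - 3)"
    by (rule obtain_subset_with_card_n)
  \<comment> \<open>z lies in A \<triangle> Z but not in A, so the partner of a member is never a member\<close>
  have "sym_diff A Z \<notin> \<A>" if "A \<in> \<A>" for A
    using that \<A>(1) z by blast
  then show ?thesis
    using \<A> by blast
qed

lemma witness_family_exists:
  assumes k: "3 \<le> k" and Z: "Z \<in> small_sets k"
  shows "\<exists>\<G>. \<G> \<subseteq> {W \<in> large_sets k. sym_diff W Z \<in> small_sets k} \<and> card \<G> = 3 ^ (k - 3)"
proof -
  obtain j where "k = j + 3"
    using k by (metis add.commute le_Suc_ex)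
  then have "(3::nat) ^ k = 27 * 3 ^ (k - 3)"
    by (simp add: power_add)
  then have "3 ^ (k - 3) \<le> card {W \<in> large_sets k. sym_diff W Z \<in> small_sets k}"
    using card_large_with_small_diff[OF Z] by simp
  then show ?thesis
    by (meson obtain_subset_with_card_n)
qed

lemma good_colouring_exists:
  assumes k: "14 \<le> k" and n: "1 \<le> n" "n \<le> k"
  shows "\<exists>f. good_colouring k n f"
proof -
  define D where "D = (3::nat) ^ (k - 3)"
  define N where "N = {1..n}"
  define F where "F = large_sets k \<rightarrow>\<^sub>E N"
  let ?s = "card (large_sets k)"
  have "3 \<le> k"
    using k by simp
  have pair_families: "\<forall>Z\<in>small_sets k. \<exists>\<A>. \<A> \<subseteq> large_sets k \<and> card \<A> = D
      \<and> (\<forall>A\<in>\<A>. sym_diff A Z \<in> large_sets k \<and> sym_diff A Z \<notin> \<A>)"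
    unfolding D_def by (intro ballI pair_family_exists[OF \<open>3 \<le> k\<close>])
  obtain \<A> where \<A>: "\<forall>Z\<in>small_sets k. \<A> Z \<subseteq> large_sets k \<and> card (\<A> Z) = D
      \<and> (\<forall>A\<in>\<A> Z. sym_diff A Z \<in> large_sets k \<and> sym_diff A Z \<notin> \<A> Z)"
    using bchoice[OF pair_families] by blast
  have witness_families: "\<forall>Z\<in>small_sets k. \<exists>\<G>. \<G> \<subseteq> {W \<in> large_sets k. sym_diff W Z \<in> small_sets k} \<and> card \<G> = D"
    unfolding D_def by (intro ballI witness_family_exists[OF \<open>3 \<le> k\<close>])
  obtain \<G> where \<G>: "\<forall>Z\<in>small_sets k.
      \<G> Z \<subseteq> {W \<in> large_sets k. sym_diff W Z \<in> small_sets k} \<and> card (\<G> Z) = D"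
    using bchoice[OF witness_families] by blast
  define bad_pairs where
    "bad_pairs = (\<lambda>(Z, i, j). {f \<in> F. \<forall>A\<in>\<A> Z. f A \<noteq> i \<or> f (sym_diff A Z) \<noteq> j})"
  define bad_witnesses where
    "bad_witnesses = (\<lambda>(Z, j). {f \<in> F. \<forall>W\<in>\<G> Z. f W \<noteq> j})"
  define B where "B = (\<Union>x\<in>small_sets k \<times> N \<times> N. bad_pairs x) \<union> (\<Union>x\<in>small_sets k \<times> N. bad_witnesses x)"
  have fin: "finite (large_sets k)" "finite (small_sets k)" "finite N"
    unfolding large_sets_def small_sets_def N_def by (auto intro: finite_subset)
  have card_N: "card N = n"
    unfolding N_def by simp
  have bad_pairs_card: "real (card (bad_pairs x)) \<le> real n ^ ?s * (1 - 1 / real n ^ 2) ^ D"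
    if x_in: "x \<in> small_sets k \<times> N \<times> N" for x
  proof -
    obtain Z i j where x: "x = (Z, i, j)" "Z \<in> small_sets k" "i \<in> N" "j \<in> N"
      using x_in by auto
    have \<A>Z: "\<A> Z \<subseteq> large_sets k" "card (\<A> Z) = D"
      "(\<lambda>A. sym_diff A Z) ` \<A> Z \<subseteq> large_sets k" "\<A> Z \<inter> (\<lambda>A. sym_diff A Z) ` \<A> Z = {}"
      using \<A> x(2) by auto
    have "inj_on (\<lambda>A. sym_diff A Z) (\<A> Z)"
      by (rule inj_onI) (metis sym_diff_cancel_right)
    then show ?thesis
      using card_PiE_avoiding_pairs[OF fin(1,3) x(3,4) \<A>Z(1,3) _ \<A>Z(4)] \<A>Z(2) x(1)
      unfolding bad_pairs_def F_def card_N by simp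
  qed
  have pairs: "real (card (\<Union>x\<in>small_sets k \<times> N \<times> N. bad_pairs x))
      \<le> real (card (small_sets k) * n * n) * (real n ^ ?s * (1 - 1 / real n ^ 2) ^ D)"
    using card_UN_le_card_mult[of "small_sets k \<times> N \<times> N" bad_pairs, OF _ bad_pairs_card] fin by (simp add: card_cartesian_product card_N)
  have bad_witnesses_card: "real (card (bad_witnesses x)) \<le> real n ^ ?s * (1 - 1 / real n) ^ D"
    if x_in: "x \<in> small_sets k \<times> N" for x
  proof -
    obtain Z j where x: "x = (Z, j)" "Z \<in> small_sets k" "j \<in> N"
      using x_in by auto
    have "\<G> Z \<subseteq> large_sets k" "card (\<G> Z) = D"
      using \<G> x(2) by auto
    then show ?thesis
      using card_PiE_avoiding_value[OF fin(1) _ fin(3) x(3)] x(1)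
      unfolding bad_witnesses_def F_def card_N by simp
  qed
  have witnesses: "real (card (\<Union>x\<in>small_sets k \<times> N. bad_witnesses x))
      \<le> real (card (small_sets k) * n) * (real n ^ ?s * (1 - 1 / real n) ^ D)"
    using card_UN_le_card_mult[of "small_sets k \<times> N" bad_witnesses, OF _ bad_witnesses_card] fin by (simp add: card_cartesian_product card_N)
  have "card (small_sets k) \<le> 2 ^ (3 * k + 1)"
    using card_mono[of "Pow {..<3*k+1}" "small_sets k"] unfolding small_sets_def by (auto simp: card_Pow)
  then have "real (card (small_sets k)) * (real n ^ 2 * (1 - 1 / real n ^ 2) ^ D
      + real n * (1 - 1 / real n) ^ D) < 1"
    using union_bound_lt_one[OF k n] unfolding D_def by blast
  then have "real n ^ ?s * (real (card (small_sets k)) * (real n ^ 2 * (1 - 1 / real n ^ 2) ^ D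
      + real n * (1 - 1 / real n) ^ D)) < real n ^ ?s * 1"
    using n by (intro mult_strict_left_mono) simp_all
  then have "real (card (small_sets k) * n * n) * (real n ^ ?s * (1 - 1 / real n ^ 2) ^ D)
      + real (card (small_sets k) * n) * (real n ^ ?s * (1 - 1 / real n) ^ D) < real n ^ ?s"
    by (simp add: algebra_simps power2_eq_square)
  then have "real (card B) < real (card F)"
  proof -
    have "card B \<le> card (\<Union>x\<in>small_sets k \<times> N \<times> N. bad_pairs x)
        + card (\<Union>x\<in>small_sets k \<times> N. bad_witnesses x)"
      unfolding B_def by (rule card_Un_le)
    then have "real (card B) \<le> real (card (\<Union>x\<in>small_sets k \<times> N \<times> N. bad_pairs x))
        + real (card (\<Union>x\<in>small_sets k \<times> N. bad_witnesses x))"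
      by (simp flip: of_nat_add)
    also have "\<dots> < real n ^ ?s"
      using pairs witnesses \<open>_ < real n ^ ?s\<close> by linarith
    also have "\<dots> = real (card F)"
      using fin unfolding F_def by (simp add: card_PiE card_N)
    finally show ?thesis .
  qed
  moreover have "finite B"
    unfolding B_def F_def bad_pairs_def bad_witnesses_def using fin by (auto intro!: finite_PiE)
  ultimately have "F - B \<noteq> {}"
    using diff_card_le_card_Diff[of B F] by fastforce
  then obtain f where f: "f \<in> F" "\<forall>x\<in>small_sets k \<times> N \<times> N. f \<notin> bad_pairs x"
    "\<forall>x\<in>small_sets k \<times> N. f \<notin> bad_witnesses x"
    unfolding B_def by blast
  have "good_colouring k n f"
    unfolding good_colouring_def
  proof (intro conjI ballI)
    show "f ` large_sets k \<subseteq> {1..n}"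
      using f(1) unfolding F_def N_def by auto
    fix Z assume Z: "Z \<in> small_sets k"
    fix i j assume "i \<in> {1..n}" "j \<in> {1..n}"
    then have "(Z, i, j) \<in> small_sets k \<times> N \<times> N"
      using Z unfolding N_def by simp
    then obtain A where "A \<in> \<A> Z" "f A = i" "f (sym_diff A Z) = j"
      using f(1,2) unfolding bad_pairs_def by blast
    then show "\<exists>A\<in>large_sets k. sym_diff A Z \<in> large_sets k \<and> f A = i \<and> f (sym_diff A Z) = j"
      using \<A> Z by blast
  next
    fix Z j assume Z: "Z \<in> small_sets k" and "j \<in> {1..n}"
    then have "(Z, j) \<in> small_sets k \<times> N"
      unfolding N_def by simp
    then obtain W where "W \<in> \<G> Z" "f W = j"
      using f(1,3) unfolding bad_witnesses_def by blast
    then show "\<exists>W\<in>large_sets k. sym_diff W Z \<in> small_sets k \<and> f W = j"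
      using \<G> Z by blast
  qed
  then show ?thesis
    by blast
qed

lemma representable_over_Z2_pow:
  assumes "14 \<le> k" "1 \<le> n" "n \<le> k"
  shows "representable_over n (Z2_pow (3 * k + 1))"
proof -
  obtain f where "good_colouring k n f"
    using good_colouring_exists[OF assms] by blast
  then show ?thesis
    using assms(1) by (intro representable_over_if_good_colouring) simp_all
qed

theorem mainTheorem2:
  shows "(\<forall>n::nat. n \<ge> 2 \<longrightarrow>
            (\<exists>K::nat. \<forall>k\<ge>K. representable_over n (Z2_pow (3 * k + 1)))) \<and>
         (\<forall>n::nat. n \<ge> 14 \<longrightarrow> representable_over n (Z2_pow (3 * n + 1)))"
proof (intro conjI allI impI)
  fix n :: nat
  assume "n \<ge> 2"
  then show "\<exists>K. \<forall>k\<ge>K. representable_over n (Z2_pow (3 * k + 1))"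
    by (intro exI[of _ "max n 14"] allI impI representable_over_Z2_pow) simp_all
next
  fix n :: nat
  assume "n \<ge> 14"
  then show "representable_over n (Z2_pow (3 * n + 1))"
    by (intro representable_over_Z2_pow) simp_all
qed

end
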